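(* Let $t\ge 2$ and $w\ge 1$ be integers and $u=\lfloor(\frac{t}{2}+1)^2\rfloor$. If a $(w,v)$ set system $(\mathcal{X},\mathcal{B})$ is not a $t$-IPPS$(w,v)$, then there exist an integer $s$ with $2\le s\le u$ and an $s$-element subset $\mathcal{U}\subseteq\mathcal{B}$ such that $\big|\bigcup_{B\in\mathcal{U}}B\big|\le (s-1)w$.
   Context: A $(w,v)$ set system is a pair $(\mathcal{X},\mathcal{B})$ with $|\mathcal{X}|=v$ and $\mathcal{B}$ a family of $w$-element subsets (blocks) of $\mathcal{X}$. For a $w$-subset $T\subseteq\mathcal{X}$ let $P_t(T)=\{\mathcal{P}\subseteq\mathcal{B}: |\mathcal{P}|\le t,\ T\subseteq\bigcup_{B\in\mathcal{P}}B\}$. The set system is a $t$-IPPS$(w,v)$ if for every $w$-subset $T\subseteq\mathcal{X}$, either $P_t(T)=\emptyset$ or $\bigcap_{\mathcal{P}\in P_t(T)}\mathcal{P}\neq\emptyset$. *)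

theory Defs
  imports Complex_Main
begin

definition set_system :: "nat \<Rightarrow> nat \<Rightarrow> 'a set \<Rightarrow> 'a set set \<Rightarrow> bool" where
  "set_system w v X B \<longleftrightarrow> finite X \<and> card X = v \<and>
     (\<forall>b\<in>B. b \<subseteq> X \<and> card b = w)"

definition P_t :: "nat \<Rightarrow> 'a set set \<Rightarrow> 'a set \<Rightarrow> 'a set set set" where
  "P_t t B T = {P. P \<subseteq> B \<and> card P \<le> t \<and> T \<subseteq> \<Union>P}"

definition IPPS :: "nat \<Rightarrow> nat \<Rightarrow> nat \<Rightarrow> 'a set \<Rightarrow> 'a set set \<Rightarrow> bool" where
  "IPPS t w v X B \<longleftrightarrow> set_system w v X B \<and>
     (\<forall>T. T \<subseteq> X \<and> card T = w \<longrightarrow>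
        P_t t B T = {} \<or> \<Inter>(P_t t B T) \<noteq> {})"

end

theory Submission
  imports Defs
begin

text \<open>If the set system is not a \<open>t\<close>-IPPS, some \<open>w\<close>-set \<open>T\<close> has covers by at most
  \<open>t\<close> blocks, but no block common to all of them. A minimal family \<open>F\<close> of such covers
  with no common block yields, for each \<open>P \<in> F\<close>, a block lying in every member of \<open>F\<close>
  except \<open>P\<close>; these \<open>m = |F|\<close> blocks are distinct and each cover contains \<open>m - 1\<close>
  of them, so the family \<open>U = \<Union>F\<close> of blocks used has at most
  \<open>m (t + 2 - m) \<le> (t/2 + 1)\<^sup>2\<close> members. Every point of \<open>T\<close> lies in two distinct
  blocks of \<open>U\<close>, since the block covering it in one cover is missing from another cover;
  double counting then gives \<open>|\<Union>U| \<le> |U| w - |T| = (|U| - 1) w\<close>.\<close>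

lemma obtain_minimal_empty_Inter:
  assumes "finite \<P>" and "\<Inter>\<P> = {}"
  obtains F where "F \<subseteq> \<P>" and "\<Inter>F = {}"
    and "\<And>P. P \<in> F \<Longrightarrow> \<Inter>(F - {P}) \<noteq> {}"
proof -
  have "\<exists>F. (F \<subseteq> \<P> \<and> \<Inter>F = {}) \<and>
      (\<forall>G. G \<subseteq> \<P> \<and> \<Inter>G = {} \<longrightarrow> card F \<le> card G)"
    by (rule ex_has_least_nat[of "\<lambda>F. F \<subseteq> \<P> \<and> \<Inter>F = {}" \<P> card])
      (simp add: assms(2))
  then obtain F where F: "F \<subseteq> \<P>" "\<Inter>F = {}"
    and least: "\<And>G. G \<subseteq> \<P> \<Longrightarrow> \<Inter>G = {} \<Longrightarrow> card F \<le> card G"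
    by auto
  show thesis
  proof (rule that[OF F])
    fix P
    assume "P \<in> F"
    have "card (F - {P}) < card F"
      using \<open>P \<in> F\<close> F(1) assms(1) by (meson card_Diff1_less finite_subset)
    then show "\<Inter>(F - {P}) \<noteq> {}"
      using least[of "F - {P}"] F(1) by auto
  qed
qed

lemma minimal_empty_Inter_representatives:
  assumes "\<Inter>F = {}" and "\<And>P. P \<in> F \<Longrightarrow> \<Inter>(F - {P}) \<noteq> {}"
  obtains f where "\<And>P Q. P \<in> F \<Longrightarrow> Q \<in> F \<Longrightarrow> f P \<in> Q \<longleftrightarrow> P \<noteq> Q"
proof -
  have "\<forall>P\<in>F. \<exists>b. b \<in> \<Inter>(F - {P})"
    using assms(2) by blast
  then obtain f where f: "\<And>P. P \<in> F \<Longrightarrow> f P \<in> \<Inter>(F - {P})"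
    by metis
  show thesis
  proof (rule that)
    fix P Q
    assume "P \<in> F" "Q \<in> F"
    have "f P \<notin> P"
      using f[OF \<open>P \<in> F\<close>] \<open>P \<in> F\<close> assms(1) by blast
    then show "f P \<in> Q \<longleftrightarrow> P \<noteq> Q"
      using f[OF \<open>P \<in> F\<close>] \<open>Q \<in> F\<close> by blast
  qed
qed

lemma card_Union_minimal_empty_Inter_le:
  assumes "finite F" and "\<Inter>F = {}" and "\<And>P. P \<in> F \<Longrightarrow> \<Inter>(F - {P}) \<noteq> {}"
    and "\<And>P. P \<in> F \<Longrightarrow> finite P" and "\<And>P. P \<in> F \<Longrightarrow> card P \<le> t"
  shows "card (\<Union>F) \<le> card F * (t + 2 - card F)"
proof -
  obtain f where f: "\<And>P Q. P \<in> F \<Longrightarrow> Q \<in> F \<Longrightarrow> f P \<in> Q \<longleftrightarrow> P \<noteq> Q"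
    using minimal_empty_Inter_representatives assms(2,3) by blast
  define m where "m = card F"
  define D where "D = f ` F"
  have "inj_on f F"
  proof (rule inj_onI)
    fix P Q
    assume "P \<in> F" "Q \<in> F" "f P = f Q"
    then show "P = Q"
      using f[of P Q] f[of Q Q] by auto
  qed
  then have "card D = m"
    by (simp add: D_def m_def card_image)
  have card_Int_D: "card (P \<inter> D) = m - 1" if "P \<in> F" for P
  proof -
    have "P \<inter> D = f ` (F - {P})"
      using f that by (auto simp: D_def)
    then show ?thesis
      using \<open>inj_on f F\<close> that assms(1) by (simp add: card_image inj_on_diff m_def)
  qed
  have "m \<noteq> 0"
    using assms(1,2) by (auto simp: m_def)
  moreover obtain P where "P \<in> F"
    using assms(2) by auto
  then have "m - 1 \<le> t"
    using card_Int_D[of P] card_mono[of P "P \<inter> D"] assms(4,5)[of P] by simp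
  ultimately have "m \<le> t + 1"
    by linarith
  have card_Diff_D: "card (P - D) \<le> t + 1 - m" if "P \<in> F" for P
    using card_Int_D[OF that] assms(4,5)[OF that] card_Int_Diff[of P D] by linarith
  have "\<Union>F \<subseteq> D \<union> (\<Union>P\<in>F. P - D)"
    by blast
  then have "card (\<Union>F) \<le> card (D \<union> (\<Union>P\<in>F. P - D))"
    using assms(1,4) by (intro card_mono) (auto simp: D_def)
  also have "\<dots> \<le> card D + card (\<Union>P\<in>F. P - D)"
    by (rule card_Un_le)
  also have "\<dots> \<le> m + (\<Sum>P\<in>F. card (P - D))"
    using card_UN_le[OF assms(1), of "\<lambda>P. P - D"] \<open>card D = m\<close> by linarith
  also have "\<dots> \<le> m + m * (t + 1 - m)"
    using sum_mono[of F _ "\<lambda>_. t + 1 - m"] card_Diff_D by (simp add: m_def)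
  also have "\<dots> = m * (t + 2 - m)"
    using \<open>m \<le> t + 1\<close> by (simp add: algebra_simps Suc_diff_le)
  finally show ?thesis
    by (simp add: m_def)
qed

lemma two_le_card_covering_members:
  assumes "finite (\<Union>F)" and "\<Inter>F = {}" and "\<And>P. P \<in> F \<Longrightarrow> T \<subseteq> \<Union>P" and "x \<in> T"
  shows "2 \<le> card {b \<in> \<Union>F. x \<in> b}"
proof -
  obtain P where P: "P \<in> F"
    using assms(2) by auto
  then obtain b where b: "b \<in> P" "x \<in> b"
    using assms(3,4) by blast
  then obtain Q where Q: "Q \<in> F" "b \<notin> Q"
    using assms(2) by blast
  then obtain b' where b': "b' \<in> Q" "x \<in> b'"
    using assms(3,4) by blast
  have "{b, b'} \<subseteq> {b \<in> \<Union>F. x \<in> b}"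
    using P b Q b' by blast
  moreover have "finite {b \<in> \<Union>F. x \<in> b}"
    using assms(1) by (rule finite_subset[rotated]) blast
  ultimately have "card {b, b'} \<le> card {b \<in> \<Union>F. x \<in> b}"
    by (rule card_mono[rotated])
  moreover have "b \<noteq> b'"
    using Q b' by blast
  ultimately show ?thesis
    by simp
qed

lemma card_Union_add_card_le_sum_card:
  assumes "finite U" and "\<And>b. b \<in> U \<Longrightarrow> finite b"
    and "\<And>x. x \<in> T \<Longrightarrow> 2 \<le> card {b \<in> U. x \<in> b}"
  shows "card (\<Union>U) + card T \<le> (\<Sum>b\<in>U. card b)"
proof -
  have "T \<subseteq> \<Union>U"
  proof
    fix x
    assume "x \<in> T"
    then have "{b \<in> U. x \<in> b} \<noteq> {}"
      using assms(3)[of x] by (metis card.empty not_numeral_le_zero)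
    then show "x \<in> \<Union>U"
      by blast
  qed
  then have "finite T"
    using assms(1,2) by (meson finite_Union finite_subset)
  have "2 * card T \<le> (\<Sum>x\<in>T. card {b \<in> U. x \<in> b})"
    using sum_mono[of T "\<lambda>_. 2" "\<lambda>x. card {b \<in> U. x \<in> b}"] assms(3) by simp
  also have "\<dots> = (\<Sum>b\<in>U. card {x \<in> T. x \<in> b})"
    by (rule sum_multicount_gen[OF assms(1) \<open>finite T\<close>, symmetric]) simp
  also have "\<dots> = (\<Sum>b\<in>U. card (b \<inter> T))"
    by (intro sum.cong refl arg_cong[where f = card]) blast
  finally have twice: "2 * card T \<le> (\<Sum>b\<in>U. card (b \<inter> T))" .
  have "\<Union>U \<subseteq> T \<union> (\<Union>b\<in>U. b - T)"
    by blast
  then have "card (\<Union>U) \<le> card (T \<union> (\<Union>b\<in>U. b - T))"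
    using assms(1,2) \<open>finite T\<close> by (intro card_mono) auto
  also have "\<dots> \<le> card T + (\<Sum>b\<in>U. card (b - T))"
    using card_Un_le[of T "\<Union>b\<in>U. b - T"] card_UN_le[OF assms(1), of "\<lambda>b. b - T"] by linarith
  finally have "card (\<Union>U) + card T \<le> (\<Sum>b\<in>U. card (b \<inter> T)) + (\<Sum>b\<in>U. card (b - T))"
    using twice by linarith
  also have "\<dots> = (\<Sum>b\<in>U. card (b \<inter> T) + card (b - T))"
    by (rule sum.distrib[symmetric])
  also have "\<dots> = (\<Sum>b\<in>U. card b)"
    by (intro sum.cong refl) (metis assms(2) card_Int_Diff)
  finally show ?thesis .
qed

lemma card_Union_le_diff_one_mult:
  assumes "finite U" and "\<And>b. b \<in> U \<Longrightarrow> finite b \<and> card b = w" and "card T = w"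
    and "\<And>x. x \<in> T \<Longrightarrow> 2 \<le> card {b \<in> U. x \<in> b}"
  shows "card (\<Union>U) \<le> (card U - 1) * w"
proof -
  have "card (\<Union>U) + card T \<le> (\<Sum>b\<in>U. card b)"
    using assms by (intro card_Union_add_card_le_sum_card) auto
  also have "\<dots> = card U * w"
    using assms(2) by simp
  finally show ?thesis
    using assms(3) by (simp add: diff_mult_distrib)
qed

lemma mult_diff_le_floor_half_square:
  fixes m n :: nat
  shows "m * (n - m) \<le> nat \<lfloor>(real n / 2)\<^sup>2\<rfloor>"
proof (cases "m \<le> n")
  case True
  have "real (m * (n - m)) = (real n / 2)\<^sup>2 - (real n / 2 - real m)\<^sup>2"
    using True by (simp add: of_nat_diff power2_eq_square field_simps)
  also have "\<dots> \<le> (real n / 2)\<^sup>2"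
    by simp
  finally show ?thesis
    by (simp add: le_nat_iff le_floor_iff)
qed simp

lemma set_system_finite_blocks:
  assumes "set_system w v X B"
  shows "finite B"
  using assms unfolding set_system_def
  by (metis Pow_iff finite_Pow_iff finite_subset subsetI)

lemma finite_P_t:
  assumes "finite B"
  shows "finite (P_t t B T)"
proof -
  have "P_t t B T \<subseteq> Pow B"
    by (auto simp: P_t_def)
  with assms show ?thesis
    by (meson finite_Pow_iff finite_subset)
qed

theorem corollary2:
  fixes t w v :: nat and X :: "'a set" and B :: "'a set set"
  assumes "t \<ge> 2" and "w \<ge> 1"
    and "set_system w v X B"
    and "\<not> IPPS t w v X B"
  shows "\<exists>s::nat. 2 \<le> s \<and> s \<le> nat (floor ((real t / 2 + 1)^2)) \<and>
           (\<exists>U. U \<subseteq> B \<and> card U = s \<and> card (\<Union>U) \<le> (s - 1) * w)"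
proof -
  have blocks: "\<And>b. b \<in> B \<Longrightarrow> finite b \<and> card b = w"
    using assms(3) unfolding set_system_def by (meson finite_subset)
  have "finite B"
    using assms(3) by (rule set_system_finite_blocks)
  obtain T where "card T = w" and no_common: "\<Inter>(P_t t B T) = {}"
    using assms(3,4) unfolding IPPS_def by auto
  obtain F where F: "F \<subseteq> P_t t B T" "\<Inter>F = {}" "\<And>P. P \<in> F \<Longrightarrow> \<Inter>(F - {P}) \<noteq> {}"
    using obtain_minimal_empty_Inter[OF finite_P_t[OF \<open>finite B\<close>] no_common] by metis
  then have covers: "\<And>P. P \<in> F \<Longrightarrow> P \<subseteq> B \<and> card P \<le> t \<and> T \<subseteq> \<Union>P"
    by (auto simp: P_t_def)
  define U where "U = \<Union>F"
  have "U \<subseteq> B" and "finite U"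
    using covers \<open>finite B\<close> by (auto simp: U_def intro: finite_subset)
  have "finite F"
    using F(1) finite_P_t[OF \<open>finite B\<close>] by (rule finite_subset)
  have "card U \<le> card F * (t + 2 - card F)"
    unfolding U_def using \<open>finite F\<close> F(2,3)
  proof (rule card_Union_minimal_empty_Inter_le)
    show "finite P" and "card P \<le> t" if "P \<in> F" for P
      using covers[OF that] \<open>finite B\<close> by (auto intro: finite_subset)
  qed
  also have "\<dots> \<le> nat \<lfloor>(real t / 2 + 1)\<^sup>2\<rfloor>"
    using mult_diff_le_floor_half_square[of "card F" "t + 2"]
    by (simp add: add_divide_distrib add.commute)
  finally have upper: "card U \<le> nat \<lfloor>(real t / 2 + 1)\<^sup>2\<rfloor>" .
  have twice: "\<And>x. x \<in> T \<Longrightarrow> 2 \<le> card {b \<in> U. x \<in> b}"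
    unfolding U_def using F(2) covers \<open>finite U\<close>
    by (intro two_le_card_covering_members) (auto simp: U_def)
  obtain x where "x \<in> T"
    using \<open>card T = w\<close> assms(2) by fastforce
  have "2 \<le> card U"
    using twice[OF \<open>x \<in> T\<close>] card_mono[OF \<open>finite U\<close>, of "{b \<in> U. x \<in> b}"] by auto
  have "card (\<Union>U) \<le> (card U - 1) * w"
    using blocks \<open>U \<subseteq> B\<close>
    by (intro card_Union_le_diff_one_mult[OF \<open>finite U\<close> _ \<open>card T = w\<close> twice]) blast
  with \<open>2 \<le> card U\<close> upper \<open>U \<subseteq> B\<close> show ?thesis
    by blast
qed

end
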